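(* Let $\mathcal{X}$ be a Polish space, $\mathcal{L}:\mathcal{X}\to[-\infty,\infty]$ measurable, $P\in\mathcal{P}(\mathcal{X})$, $D$ a pre-divergence such that $Q\mapsto D(Q\|P)$ is convex, and $c$ a cost function with $c(x,x)=0$ for all $x$. Suppose there exists $\epsilon>0$ such that $\mathcal{L}\in L^1(Q)$ for all $Q\in\mathcal{P}(\mathcal{X})$ with $D^c(Q\|P)\leq\epsilon$. Then $\mathcal{L}\in L^1(Q)$ for all $Q\in\mathcal{P}(\mathcal{X})$ with $D^c(Q\|P)<\infty$.
   Context: $\mathcal{P}(\mathcal{X})$ is the set of Borel probability measures on the Polish space $\mathcal{X}$. A pre-divergence is $D:\mathcal{P}(\mathcal{X})\times\mathcal{P}(\mathcal{X})\to[0,\infty]$ with $D(\mu\|\mu)=0$ for all $\mu$. A cost function is a lower semicontinuous $c:\mathcal{X}\times\mathcal{X}\to[0,\infty]$, with OT cost $C(\mu,\nu)=\inf\{\int c\,d\pi:\pi_1=\mu,\pi_2=\nu\}$. $D^c(\nu\|\mu)=\inf_{\eta\in\mathcal{P}(\mathcal{X})}\{D(\eta\|\mu)+C(\eta,\nu)\}$. *)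

theory Defs
  imports "HOL-Analysis.Analysis" "HOL-Probability.Probability"
begin

definition prob_measures :: "'a::topological_space measure set" where
  "prob_measures = {M. prob_space M \<and> sets M = sets (borel :: 'a measure)}"

definition lsc :: "('b::topological_space \<Rightarrow> ennreal) \<Rightarrow> bool" where
  "lsc f \<longleftrightarrow> (\<forall>x t. t < f x \<longrightarrow> (\<forall>\<^sub>F y in nhds x. t < f y))"

definition cost_function :: "('a::topological_space \<times> 'a \<Rightarrow> ennreal) \<Rightarrow> bool" where
  "cost_function c \<longleftrightarrow> lsc c"

definition couplings :: "'a::topological_space measure \<Rightarrow> 'a measure \<Rightarrow> ('a \<times> 'a) measure set" where
  "couplings \<mu> \<nu> = {\<pi>. prob_space \<pi> \<and> sets \<pi> = sets (borel :: ('a \<times> 'a) measure)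
      \<and> distr \<pi> borel fst = \<mu> \<and> distr \<pi> borel snd = \<nu>}"

definition OT_cost :: "('a::topological_space \<times> 'a \<Rightarrow> ennreal) \<Rightarrow> 'a measure \<Rightarrow> 'a measure \<Rightarrow> ennreal" where
  "OT_cost c \<mu> \<nu> = (INF \<pi>\<in>couplings \<mu> \<nu>. \<integral>\<^sup>+ z. c z \<partial>\<pi>)"

definition pre_divergence :: "('a::topological_space measure \<Rightarrow> 'a measure \<Rightarrow> ennreal) \<Rightarrow> bool" where
  "pre_divergence D \<longleftrightarrow> (\<forall>\<mu>\<in>prob_measures. D \<mu> \<mu> = 0)"

definition Dc :: "('a::topological_space measure \<Rightarrow> 'a measure \<Rightarrow> ennreal) \<Rightarrow> ('a \<times> 'a \<Rightarrow> ennreal)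
    \<Rightarrow> 'a measure \<Rightarrow> 'a measure \<Rightarrow> ennreal" where
  "Dc D c \<nu> \<mu> = (INF \<eta>\<in>prob_measures. D \<eta> \<mu> + OT_cost c \<eta> \<nu>)"

definition mixture :: "real \<Rightarrow> 'a::topological_space measure \<Rightarrow> 'a measure \<Rightarrow> 'a measure" where
  "mixture t Q1 Q2 = measure_of UNIV (sets (borel :: 'a measure))
      (\<lambda>A. ennreal t * emeasure Q1 A + ennreal (1 - t) * emeasure Q2 A)"

definition convex_in_first :: "('a::topological_space measure \<Rightarrow> 'a measure \<Rightarrow> ennreal) \<Rightarrow> 'a measure \<Rightarrow> bool" where
  "convex_in_first D P \<longleftrightarrow> (\<forall>Q1\<in>prob_measures. \<forall>Q2\<in>prob_measures. \<forall>t\<in>{0..1::real}.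
      D (mixture t Q1 Q2) P \<le> ennreal t * D Q1 P + ennreal (1 - t) * D Q2 P)"

definition ereal_L1 :: "'a measure \<Rightarrow> ('a \<Rightarrow> ereal) \<Rightarrow> bool" where
  "ereal_L1 Q L \<longleftrightarrow> (\<integral>\<^sup>+ x. e2ennreal \<bar>L x\<bar> \<partial>Q) < \<infinity>"

end

theory Submission
  imports Defs
begin

text \<open>Let \<open>Q\<^sub>t = t Q + (1 - t) P\<close>. For any \<open>\<eta>\<close> and coupling \<open>\<pi>\<close> of \<open>\<eta>\<close> and \<open>Q\<close>, the mixture of \<open>\<pi>\<close>
  with the diagonal coupling of \<open>P\<close> (which costs nothing since \<open>c\<close> vanishes on the diagonal) couples
  \<open>t \<eta> + (1 - t) P\<close> with \<open>Q\<^sub>t\<close>. Convexity of \<open>D(\<cdot>\<parallel>P)\<close> and \<open>D(P\<parallel>P) = 0\<close> then give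
  \<open>D\<^sup>c(Q\<^sub>t\<parallel>P) \<le> t D\<^sup>c(Q\<parallel>P)\<close>, which is at most \<open>\<epsilon>\<close> for small \<open>t > 0\<close>. Hence \<open>L\<close> is integrable
  w.r.t. \<open>Q\<^sub>t\<close>, and \<open>\<integral>|L| dQ\<^sub>t \<ge> t \<integral>|L| dQ\<close>.\<close>

lemma sets_mixture:
  "sets (mixture t Q1 Q2) = sets (borel :: 'a::topological_space measure)"
  unfolding mixture_def
  by (subst sets_measure_of) (auto simp: sets.sigma_sets_eq[of borel, simplified])

lemma space_mixture: "space (mixture t Q1 Q2) = UNIV"
  using sets_eq_imp_space_eq[OF sets_mixture] by simp

lemma emeasure_mixture:
  fixes Q1 Q2 :: "'a::topological_space measure"
  assumes "sets Q1 = sets borel" "sets Q2 = sets borel" "0 \<le> t" "t \<le> 1"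
    and A: "A \<in> sets borel"
  shows "emeasure (mixture t Q1 Q2) A = ennreal t * emeasure Q1 A + ennreal (1 - t) * emeasure Q2 A"
  unfolding mixture_def
proof (rule emeasure_measure_of_sigma)
  show "sigma_algebra UNIV (sets (borel::'a measure))"
    using sets.sigma_algebra_axioms[of borel] by simp
  show "positive (sets borel) (\<lambda>A. ennreal t * emeasure Q1 A + ennreal (1 - t) * emeasure Q2 A)"
    by (simp add: positive_def)
  show "countably_additive (sets borel) (\<lambda>A. ennreal t * emeasure Q1 A + ennreal (1 - t) * emeasure Q2 A)"
  proof (rule countably_additiveI)
    fix F :: "nat \<Rightarrow> 'a set" assume F: "range F \<subseteq> sets borel" "disjoint_family F"
    have 1: "(\<Sum>i. emeasure Q1 (F i)) = emeasure Q1 (\<Union>i. F i)"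
      using F assms by (intro suminf_emeasure) auto
    have 2: "(\<Sum>i. emeasure Q2 (F i)) = emeasure Q2 (\<Union>i. F i)"
      using F assms by (intro suminf_emeasure) auto
    show "(\<Sum>i. ennreal t * emeasure Q1 (F i) + ennreal (1 - t) * emeasure Q2 (F i)) =
         ennreal t * emeasure Q1 (\<Union>i. F i) + ennreal (1 - t) * emeasure Q2 (\<Union>i. F i)"
      by (simp add: suminf_add[symmetric] ennreal_suminf_cmult 1 2)
  qed
qed (use A in auto)

lemma nn_integral_mixture:
  fixes Q1 Q2 :: "'a::topological_space measure"
  assumes s1: "sets Q1 = sets borel" and s2: "sets Q2 = sets borel" and t: "0 \<le> t" "t \<le> 1"
    and f: "f \<in> borel_measurable borel"
  shows "(\<integral>\<^sup>+x. f x \<partial>mixture t Q1 Q2) = ennreal t * (\<integral>\<^sup>+x. f x \<partial>Q1) + ennreal (1 - t) * (\<integral>\<^sup>+x. f x \<partial>Q2)"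
  using f
proof induction
  have meas: "g \<in> borel_measurable Q1" "g \<in> borel_measurable Q2" "g \<in> borel_measurable (mixture t Q1 Q2)"
    if "g \<in> borel_measurable borel" for g :: "'a \<Rightarrow> ennreal"
    using that by (simp_all add: measurable_cong_sets[OF s1 refl] measurable_cong_sets[OF s2 refl]
        measurable_cong_sets[OF sets_mixture refl])
  {
    case (cong f g)
    then show ?case
      by (simp add: space_mixture sets_eq_imp_space_eq[OF s1] sets_eq_imp_space_eq[OF s2]
          cong: nn_integral_cong_simp)
  next
    case (set A)
    then show ?case
      by (simp add: emeasure_mixture[OF s1 s2 t] sets_mixture s1 s2
          nn_integral_indicator[of A "mixture t Q1 Q2"])
  next
    case (mult f c)
    then show ?case
      by (simp add: meas nn_integral_cmult distrib_left mult.left_commute)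
  next
    case (add f g)
    then show ?case
      by (simp add: meas nn_integral_add distrib_left algebra_simps)
  next
    case (seq U)
    have mono: "incseq (\<lambda>i. a * (\<integral>\<^sup>+x. U i x \<partial>M))" for a :: ennreal and M
      using seq by (auto simp: incseq_def le_fun_def intro!: mult_left_mono nn_integral_mono)
    have "(\<integral>\<^sup>+x. (SUP i. U i x) \<partial>mixture t Q1 Q2) = (SUP i. \<integral>\<^sup>+x. U i x \<partial>mixture t Q1 Q2)"
      using seq by (intro nn_integral_monotone_convergence_SUP) (auto simp: meas)
    also have "\<dots> = (SUP i. ennreal t * (\<integral>\<^sup>+x. U i x \<partial>Q1) + ennreal (1 - t) * (\<integral>\<^sup>+x. U i x \<partial>Q2))"
      using seq by simp
    also have "\<dots> = (SUP i. ennreal t * (\<integral>\<^sup>+x. U i x \<partial>Q1)) + (SUP i. ennreal (1 - t) * (\<integral>\<^sup>+x. U i x \<partial>Q2))"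
      by (rule ennreal_SUP_add[OF mono mono])
    also have "\<dots> = ennreal t * (\<integral>\<^sup>+x. (SUP i. U i x) \<partial>Q1) + ennreal (1 - t) * (\<integral>\<^sup>+x. (SUP i. U i x) \<partial>Q2)"
      using seq by (simp add: meas nn_integral_monotone_convergence_SUP SUP_mult_left_ennreal[symmetric])
    finally show ?case by (simp add: image_comp)
  }
qed

lemma mixture_in_prob_measures:
  assumes "Q1 \<in> prob_measures" "Q2 \<in> prob_measures" "0 \<le> t" "t \<le> 1"
  shows "mixture t Q1 Q2 \<in> prob_measures"
proof -
  have s: "sets Q1 = sets borel" "sets Q2 = sets borel" "prob_space Q1" "prob_space Q2"
    using assms by (auto simp: prob_measures_def)
  have u: "emeasure Q1 UNIV = 1" "emeasure Q2 UNIV = 1"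
    using prob_space.emeasure_space_1[OF s(3)] prob_space.emeasure_space_1[OF s(4)]
      sets_eq_imp_space_eq[OF s(1)] sets_eq_imp_space_eq[OF s(2)] by auto
  have "emeasure (mixture t Q1 Q2) (space (mixture t Q1 Q2)) = ennreal t + ennreal (1 - t)"
    using s assms(3,4) u by (simp add: space_mixture emeasure_mixture)
  also have "\<dots> = 1" using assms(3,4) by (simp add: ennreal_plus[symmetric] del: ennreal_plus)
  finally have "emeasure (mixture t Q1 Q2) (space (mixture t Q1 Q2)) = 1" .
  then show ?thesis
    by (auto simp: prob_measures_def sets_mixture intro!: prob_spaceI)
qed

lemma distr_mixture:
  fixes Q1 Q2 :: "'a::topological_space measure"
  assumes s1: "sets Q1 = sets borel" and s2: "sets Q2 = sets borel" and t: "0 \<le> t" "t \<le> 1"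
    and f: "f \<in> measurable (borel :: 'a measure) (borel :: 'b::topological_space measure)"
  shows "distr (mixture t Q1 Q2) borel f = mixture t (distr Q1 borel f) (distr Q2 borel f)"
proof (rule measure_eqI)
  show "sets (distr (mixture t Q1 Q2) borel f) = sets (mixture t (distr Q1 borel f) (distr Q2 borel f))"
    by (simp add: sets_mixture)
  fix A assume "A \<in> sets (distr (mixture t Q1 Q2) borel f)"
  then have A: "A \<in> sets borel" by simp
  have fm: "f \<in> measurable (mixture t Q1 Q2) borel" "f \<in> measurable Q1 borel" "f \<in> measurable Q2 borel"
    using f by (auto simp: measurable_cong_sets[OF s1 refl] measurable_cong_sets[OF s2 refl]
        measurable_cong_sets[OF sets_mixture refl])
  have pre: "f -` A \<in> sets borel"
    using measurable_sets[OF f A] by simp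
  have sp1: "space Q1 = UNIV" "space Q2 = UNIV"
    using sets_eq_imp_space_eq[OF s1] sets_eq_imp_space_eq[OF s2] by auto
  have "emeasure (distr (mixture t Q1 Q2) borel f) A = emeasure (mixture t Q1 Q2) (f -` A)"
    using emeasure_distr[OF fm(1) A] by (simp add: space_mixture)
  also have "\<dots> = ennreal t * emeasure Q1 (f -` A) + ennreal (1 - t) * emeasure Q2 (f -` A)"
    by (rule emeasure_mixture[OF s1 s2 t pre])
  also have "\<dots> = ennreal t * emeasure (distr Q1 borel f) A + ennreal (1 - t) * emeasure (distr Q2 borel f) A"
    using emeasure_distr[OF fm(2) A] emeasure_distr[OF fm(3) A] sp1 by simp
  also have "\<dots> = emeasure (mixture t (distr Q1 borel f) (distr Q2 borel f)) A"
    by (rule emeasure_mixture[symmetric]) (use t A in auto)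
  finally show "emeasure (distr (mixture t Q1 Q2) borel f) A = emeasure (mixture t (distr Q1 borel f) (distr Q2 borel f)) A" .
qed

lemma mixture_in_couplings:
  fixes \<pi>1 \<pi>2 :: "('a::second_countable_topology \<times> 'a) measure"
  assumes \<pi>1: "\<pi>1 \<in> couplings \<mu>1 \<nu>1" and \<pi>2: "\<pi>2 \<in> couplings \<mu>2 \<nu>2" and t: "0 \<le> t" "t \<le> 1"
  shows "mixture t \<pi>1 \<pi>2 \<in> couplings (mixture t \<mu>1 \<mu>2) (mixture t \<nu>1 \<nu>2)"
proof -
  have prob: "\<pi>1 \<in> prob_measures" "\<pi>2 \<in> prob_measures"
    using \<pi>1 \<pi>2 by (auto simp: couplings_def prob_measures_def)
  have fst: "fst \<in> measurable (borel :: ('a \<times> 'a) measure) borel"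
    and snd: "snd \<in> measurable (borel :: ('a \<times> 'a) measure) borel"
    by (simp_all add: borel_prod[symmetric])
  show ?thesis
    using mixture_in_prob_measures[OF prob t] prob \<pi>1 \<pi>2 t
      distr_mixture[OF _ _ t fst] distr_mixture[OF _ _ t snd]
    by (auto simp: couplings_def prob_measures_def)
qed

lemma borel_measurable_lsc:
  fixes c :: "'b::topological_space \<Rightarrow> ennreal"
  assumes "lsc c"
  shows "c \<in> borel_measurable borel"
proof (rule borel_measurableI_greater)
  fix y
  have "open {x. y < c x}"
  proof (rule open_subopen[THEN iffD2, rule_format])
    fix x assume "x \<in> {x. y < c x}"
    then have "\<forall>\<^sub>F z in nhds x. y < c z" using assms unfolding lsc_def by blast
    then show "\<exists>T. open T \<and> x \<in> T \<and> T \<subseteq> {x. y < c x}"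
      unfolding eventually_nhds by blast
  qed
  then show "{x \<in> space borel. y < c x} \<in> sets borel" by simp
qed

definition diagonal_coupling :: "'a::topological_space measure \<Rightarrow> ('a \<times> 'a) measure" where
  "diagonal_coupling P = distr P borel (\<lambda>x. (x, x))"

lemma measurable_diagonal:
  "(\<lambda>x::'a::second_countable_topology. (x, x)) \<in> measurable borel borel"
proof -
  have "(\<lambda>x::'a. (x, x)) \<in> measurable borel (borel \<Otimes>\<^sub>M borel)" by measurable
  then show ?thesis by (simp add: borel_prod)
qed

lemma measurable_diagonal_on:
  fixes P :: "'a::second_countable_topology measure"
  assumes "sets P = sets borel"
  shows "(\<lambda>x. (x, x)) \<in> measurable P borel"
  using measurable_diagonal by (simp add: measurable_cong_sets[OF assms refl])

lemma diagonal_coupling_in_couplings: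
  fixes P :: "'a::second_countable_topology measure"
  assumes P: "P \<in> prob_measures"
  shows "diagonal_coupling P \<in> couplings P P"
proof -
  have sP: "sets P = sets borel" and "prob_space P"
    using P by (auto simp: prob_measures_def)
  note diag = measurable_diagonal_on[OF sP]
  have "distr (diagonal_coupling P) borel fst = P"
    using diag unfolding diagonal_coupling_def
    by (subst distr_distr) (simp_all add: comp_def distr_id2 sP borel_prod[symmetric])
  moreover have "distr (diagonal_coupling P) borel snd = P"
    using diag unfolding diagonal_coupling_def
    by (subst distr_distr) (simp_all add: comp_def distr_id2 sP borel_prod[symmetric])
  ultimately show ?thesis
    using prob_space.prob_space_distr[OF \<open>prob_space P\<close> diag]
    by (simp add: couplings_def diagonal_coupling_def)
qed

lemma nn_integral_diagonal_coupling:
  fixes P :: "'a::second_countable_topology measure"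
  assumes "sets P = sets borel" and "f \<in> borel_measurable borel"
  shows "(\<integral>\<^sup>+z. f z \<partial>diagonal_coupling P) = (\<integral>\<^sup>+x. f (x, x) \<partial>P)"
  unfolding diagonal_coupling_def
  using measurable_diagonal_on[OF assms(1)] assms(2) by (simp add: nn_integral_distr)

lemma le_mult_add_INF_ennreal:
  fixes c a x :: ennreal
  assumes c: "0 < c" "c < top" and le: "\<And>i. i \<in> I \<Longrightarrow> x \<le> c * (a + f i)"
  shows "x \<le> c * (a + (INF i\<in>I. f i))"
proof (cases "I = {}")
  case True
  then show ?thesis using c by (simp add: ennreal_mult_top)
next
  case False
  have "continuous (at_right (Inf (f ` I))) (\<lambda>y. c * (a + y))"
    unfolding continuous_within using c
    by (intro ennreal_tendsto_cmult tendsto_add tendsto_const tendsto_ident_at) simp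
  then have "c * (a + (INF i\<in>I. f i)) = (INF i\<in>I. c * (a + f i))"
    using False continuous_at_Inf_mono[of "\<lambda>y. c * (a + y)" "f ` I"]
    by (simp add: mono_def mult_left_mono add_left_mono image_comp)
  then show ?thesis
    using le by (simp add: le_INF_iff)
qed

lemma Dc_mixture_le_coupling:
  fixes P :: "'a::second_countable_topology measure"
  assumes P: "P \<in> prob_measures" and D: "pre_divergence D" and D_convex: "convex_in_first D P"
    and c: "c \<in> borel_measurable borel" and c_diag: "\<And>x. c (x, x) = 0"
    and \<eta>: "\<eta> \<in> prob_measures" and \<pi>: "\<pi> \<in> couplings \<eta> Q" and t: "0 \<le> t" "t \<le> 1"
  shows "Dc D c (mixture t Q P) P \<le> ennreal t * (D \<eta> P + (\<integral>\<^sup>+z. c z \<partial>\<pi>))"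
proof -
  let ?\<eta> = "mixture t \<eta> P" and ?\<pi> = "mixture t \<pi> (diagonal_coupling P)"
  have \<pi>_t: "?\<pi> \<in> couplings ?\<eta> (mixture t Q P)"
    using mixture_in_couplings[OF \<pi> diagonal_coupling_in_couplings[OF P] t] .
  have "D ?\<eta> P \<le> ennreal t * D \<eta> P"
    using D_convex D \<eta> P t by (force simp: convex_in_first_def pre_divergence_def)
  moreover have "(\<integral>\<^sup>+z. c z \<partial>?\<pi>) = ennreal t * (\<integral>\<^sup>+z. c z \<partial>\<pi>)"
  proof -
    have "sets \<pi> = sets borel" "sets (diagonal_coupling P) = sets borel" "sets P = sets borel"
      using \<pi> diagonal_coupling_in_couplings[OF P] P by (auto simp: couplings_def prob_measures_def)
    then show ?thesis
      using t c by (simp add: nn_integral_mixture nn_integral_diagonal_coupling c_diag)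
  qed
  moreover have "Dc D c (mixture t Q P) P \<le> D ?\<eta> P + OT_cost c ?\<eta> (mixture t Q P)"
    unfolding Dc_def using mixture_in_prob_measures[OF \<eta> P t] by (rule INF_lower)
  moreover have "OT_cost c ?\<eta> (mixture t Q P) \<le> (\<integral>\<^sup>+z. c z \<partial>?\<pi>)"
    unfolding OT_cost_def using \<pi>_t by (rule INF_lower)
  ultimately show ?thesis
    by (simp add: distrib_left) (meson add_mono order_trans)
qed

lemma Dc_mixture_le:
  fixes P :: "'a::second_countable_topology measure"
  assumes P: "P \<in> prob_measures" and D: "pre_divergence D" and D_convex: "convex_in_first D P"
    and c: "c \<in> borel_measurable borel" and c_diag: "\<And>x. c (x, x) = 0"
    and t: "0 < t" "t \<le> 1"
  shows "Dc D c (mixture t Q P) P \<le> ennreal t * Dc D c Q P"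
proof -
  have "Dc D c (mixture t Q P) P \<le> ennreal t * (0 + (INF \<eta>\<in>prob_measures. D \<eta> P + OT_cost c \<eta> Q))"
  proof (rule le_mult_add_INF_ennreal)
    fix \<eta> :: "'a measure" assume \<eta>: "\<eta> \<in> prob_measures"
    have "Dc D c (mixture t Q P) P \<le> ennreal t * (D \<eta> P + (INF \<pi>\<in>couplings \<eta> Q. \<integral>\<^sup>+z. c z \<partial>\<pi>))"
      using t by (intro le_mult_add_INF_ennreal Dc_mixture_le_coupling[OF P D D_convex c c_diag \<eta>]) auto
    then show "Dc D c (mixture t Q P) P \<le> ennreal t * (0 + (D \<eta> P + OT_cost c \<eta> Q))"
      by (simp add: OT_cost_def)
  qed (use t in auto)
  then show ?thesis by (simp add: Dc_def)
qed

lemma ereal_L1_mixtureD: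
  assumes "sets Q = sets borel" "sets P = sets borel" and "L \<in> borel_measurable borel"
    and t: "0 < t" "t \<le> 1" and "ereal_L1 (mixture t Q P) L"
  shows "ereal_L1 Q L"
proof -
  have "ennreal t * (\<integral>\<^sup>+x. e2ennreal \<bar>L x\<bar> \<partial>Q) < \<infinity>"
    using assms by (auto simp: ereal_L1_def nn_integral_mixture)
  then show ?thesis
    using t by (auto simp: ereal_L1_def ennreal_mult_less_top)
qed

theorem lemma4:
  fixes L :: "'a::polish_space \<Rightarrow> ereal"
    and P :: "'a measure"
    and D :: "'a measure \<Rightarrow> 'a measure \<Rightarrow> ennreal"
    and c :: "'a \<times> 'a \<Rightarrow> ennreal"
  assumes L_meas: "L \<in> borel_measurable borel"
    and P: "P \<in> prob_measures"
    and D: "pre_divergence D"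
    and D_convex: "convex_in_first D P"
    and c: "cost_function c"
    and c_diag: "\<And>x. c (x, x) = 0"
    and eps: "\<exists>\<epsilon>>0. \<forall>Q\<in>prob_measures. Dc D c Q P \<le> ennreal \<epsilon> \<longrightarrow> ereal_L1 Q L"
  shows "\<forall>Q\<in>prob_measures. Dc D c Q P < \<infinity> \<longrightarrow> ereal_L1 Q L"
proof (intro ballI impI)
  fix Q assume Q: "Q \<in> prob_measures" and fin: "Dc D c Q P < \<infinity>"
  obtain \<epsilon> where "\<epsilon> > 0" and small_L1: "\<And>Q. Q \<in> prob_measures \<Longrightarrow> Dc D c Q P \<le> ennreal \<epsilon> \<Longrightarrow> ereal_L1 Q L"
    using eps by auto
  define K where "K = enn2real (Dc D c Q P)"
  define t where "t = min 1 (\<epsilon> / (K + 1))"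
  have K: "Dc D c Q P = ennreal K" "0 \<le> K"
    using fin by (simp_all add: K_def)
  have t: "0 < t" "t \<le> 1" and "t * K \<le> \<epsilon>"
    using \<open>\<epsilon> > 0\<close> K(2) by (auto simp: t_def min_def field_simps)
  have c_meas: "c \<in> borel_measurable borel"
    using c by (simp add: cost_function_def borel_measurable_lsc)
  have "Dc D c (mixture t Q P) P \<le> ennreal t * Dc D c Q P"
    by (rule Dc_mixture_le[OF P D D_convex c_meas c_diag t])
  also have "\<dots> = ennreal (t * K)"
    using t K by (simp add: ennreal_mult)
  also have "\<dots> \<le> ennreal \<epsilon>"
    using \<open>t * K \<le> \<epsilon>\<close> by (rule ennreal_leI)
  finally have "ereal_L1 (mixture t Q P) L"
    using small_L1 mixture_in_prob_measures[OF Q P] t by simp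
  then show "ereal_L1 Q L"
    using ereal_L1_mixtureD L_meas P Q t by (auto simp: prob_measures_def)
qed

end
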